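(* Let $G$ be a finite bipartite graph. If $G$ has a nonempty channel, then the number $m_G$ of perfect matchings of $G$ is even.
   Context: A channel of a graph $G=(V,E)$ is a set $C\subseteq V$ such that every vertex of $G$ is adjacent to an even number of vertices of $C$. *)

theory Defs
  imports Main
begin

definition simple_graph :: "'a set \<Rightarrow> 'a set set \<Rightarrow> bool" where
  "simple_graph V E \<longleftrightarrow> finite V \<and> (\<forall>e\<in>E. e \<subseteq> V \<and> card e = 2)"

definition adjacent :: "'a set set \<Rightarrow> 'a \<Rightarrow> 'a \<Rightarrow> bool" where
  "adjacent E u v \<longleftrightarrow> {u, v} \<in> E"

definition bipartite :: "'a set \<Rightarrow> 'a set set \<Rightarrow> bool" where
  "bipartite V E \<longleftrightarrow> (\<exists>X Y. X \<union> Y = V \<and> X \<inter> Y = {} \<and>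
      (\<forall>e\<in>E. card (e \<inter> X) = 1 \<and> card (e \<inter> Y) = 1))"

definition perfect_matching :: "'a set \<Rightarrow> 'a set set \<Rightarrow> 'a set set \<Rightarrow> bool" where
  "perfect_matching V E M \<longleftrightarrow> M \<subseteq> E \<and> (\<forall>v\<in>V. \<exists>!e. e \<in> M \<and> v \<in> e)"

definition num_perfect_matchings :: "'a set \<Rightarrow> 'a set set \<Rightarrow> nat" where
  "num_perfect_matchings V E = card {M. perfect_matching V E M}"

definition channel :: "'a set \<Rightarrow> 'a set set \<Rightarrow> 'a set \<Rightarrow> bool" where
  "channel V E C \<longleftrightarrow> C \<subseteq> V \<and> (\<forall>v\<in>V. even (card {u\<in>C. adjacent E v u}))"

end

theory Submission
  imports Defs "HOL-Library.Z2" "HOL-Library.FuncSet" "HOL-Combinatorics.Transposition"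
begin

text \<open>
  With sides X and Y, perfect matchings correspond to bijections \<open>\<sigma> : X \<rightarrow> Y\<close> with every
  \<open>{x, \<sigma> x}\<close> an edge, so their number is, modulo 2, the permanent of the biadjacency matrix
  over GF(2). Take \<open>x0 \<in> C\<close>, say on side X. As every \<open>y \<in> Y\<close> has an even number of
  neighbours in \<open>C \<inter> X\<close>, the row of \<open>x0\<close> is the sum of the rows of the other vertices of
  \<open>C \<inter> X\<close>. Expanding along that row writes the permanent as a sum of permanents with two equal
  rows, and each of these vanishes over GF(2): composing with the transposition of the two rows
  is a fixed-point-free involution on the bijections that preserves the summand.
\<close>

lemma of_nat_eq_0_bit_iff: "(of_nat n = (0::bit)) \<longleftrightarrow> even n"
  by (metis bit_2_eq_0 dvd_0_left_iff even_of_nat)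

lemma sum_fixpoint_free_involution_bit:
  assumes "finite S"
    and "\<And>s. s \<in> S \<Longrightarrow> g s \<in> S" "\<And>s. s \<in> S \<Longrightarrow> g (g s) = s" "\<And>s. s \<in> S \<Longrightarrow> g s \<noteq> s"
    and "\<And>s. s \<in> S \<Longrightarrow> f (g s) = f s"
  shows "sum f S = (0::bit)"
proof -
  define orbits where "orbits = (\<lambda>s. {s, g s}) ` S"
  have "S = \<Union> orbits"
    using assms(2) by (auto simp: orbits_def)
  moreover have "A \<inter> B = {}" if "A \<in> orbits" "B \<in> orbits" "A \<noteq> B" for A B
    using that assms(3) unfolding orbits_def by auto metis+
  moreover have orbit_sum: "sum f {s, g s} = 0" if "s \<in> S" for s
  proof -
    have "s \<notin> {g s}"
      using assms(4)[OF that] by auto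
    then show ?thesis
      using assms(5)[OF that] by simp
  qed
  ultimately have "sum f S = sum (sum f) orbits"
    using sum.Union_disjoint[of orbits f] by (simp add: orbits_def)
  also have "\<dots> = 0"
    using orbit_sum by (intro sum.neutral) (auto simp: orbits_def)
  finally show ?thesis .
qed

definition bijections :: "'a set \<Rightarrow> 'b set \<Rightarrow> ('a \<Rightarrow> 'b) set" where
  "bijections X Y = {\<sigma> \<in> X \<rightarrow>\<^sub>E Y. bij_betw \<sigma> X Y}"

definition permanent :: "('a \<Rightarrow> 'b \<Rightarrow> 'r::comm_semiring_1) \<Rightarrow> 'a set \<Rightarrow> 'b set \<Rightarrow> 'r" where
  "permanent a X Y = (\<Sum>\<sigma>\<in>bijections X Y. \<Prod>x\<in>X. a x (\<sigma> x))"

lemma finite_bijections: "finite X \<Longrightarrow> finite Y \<Longrightarrow> finite (bijections X Y)"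
  unfolding bijections_def by (rule finite_subset[of _ "X \<rightarrow>\<^sub>E Y"]) (auto intro: finite_PiE)

lemma of_nat_card_bijections_eq_permanent:
  assumes "finite X" "finite Y"
  shows "(of_nat (card {\<sigma> \<in> bijections X Y. \<forall>x\<in>X. R x (\<sigma> x)}) :: 'r::comm_semiring_1)
         = permanent (\<lambda>x y. of_bool (R x y)) X Y"
proof -
  have prod_of_bool: "(\<Prod>x\<in>X. of_bool (R x (\<sigma> x))) = (of_bool (\<forall>x\<in>X. R x (\<sigma> x)) :: 'r)" for \<sigma>
    using assms(1) by (induction X rule: finite_induct) auto
  have "permanent (\<lambda>x y. of_bool (R x y)) X Y
        = (\<Sum>\<sigma>\<in>bijections X Y. (of_bool (\<forall>x\<in>X. R x (\<sigma> x)) :: 'r))"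
    unfolding permanent_def prod_of_bool ..
  then show ?thesis
    using finite_bijections[OF assms] by (simp add: Int_def)
qed

lemma permanent_expand_row:
  assumes "finite X" "x0 \<in> X" and row: "\<And>y. y \<in> Y \<Longrightarrow> a x0 y = (\<Sum>i\<in>I. b i y)"
  shows "permanent a X Y = (\<Sum>i\<in>I. permanent (a(x0 := b i)) X Y)"
proof -
  have "(\<Prod>x\<in>X. a x (\<sigma> x)) = (\<Sum>i\<in>I. \<Prod>x\<in>X. (a(x0 := b i)) x (\<sigma> x))"
    if "\<sigma> \<in> bijections X Y" for \<sigma>
  proof -
    have "\<sigma> x0 \<in> Y"
      using that assms(2) by (auto simp: bijections_def)
    have "(\<Prod>x\<in>X - {x0}. (a(x0 := b i)) x (\<sigma> x)) = (\<Prod>x\<in>X - {x0}. a x (\<sigma> x))" for i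
      by (rule prod.cong) auto
    then have updated_row: "(\<Prod>x\<in>X. (a(x0 := b i)) x (\<sigma> x)) = b i (\<sigma> x0) * (\<Prod>x\<in>X - {x0}. a x (\<sigma> x))"
      for i using prod.remove[OF assms(1,2), of "\<lambda>x. (a(x0 := b i)) x (\<sigma> x)"] by simp
    have "(\<Prod>x\<in>X. a x (\<sigma> x)) = a x0 (\<sigma> x0) * (\<Prod>x\<in>X - {x0}. a x (\<sigma> x))"
      using prod.remove[OF assms(1,2)] by simp
    also have "\<dots> = (\<Sum>i\<in>I. b i (\<sigma> x0) * (\<Prod>x\<in>X - {x0}. a x (\<sigma> x)))"
      using row[OF \<open>\<sigma> x0 \<in> Y\<close>] by (simp add: sum_distrib_right)
    also have "\<dots> = (\<Sum>i\<in>I. \<Prod>x\<in>X. (a(x0 := b i)) x (\<sigma> x))"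
      by (simp only: updated_row)
    finally show ?thesis .
  qed
  then show ?thesis
    unfolding permanent_def by (simp add: sum.swap[of _ I] cong: sum.cong)
qed

lemma permanent_equal_rows_bit:
  assumes "finite X" "finite Y" "x0 \<in> X" "x1 \<in> X" "x0 \<noteq> x1"
    and rows: "\<And>y. y \<in> Y \<Longrightarrow> a x0 y = a x1 y"
  shows "permanent a X Y = (0::bit)"
  unfolding permanent_def
proof (rule sum_fixpoint_free_involution_bit[where g = "\<lambda>\<sigma>. \<sigma> \<circ> transpose x0 x1"])
  fix \<sigma> assume \<sigma>: "\<sigma> \<in> bijections X Y"
  then have \<sigma>_bij: "bij_betw \<sigma> X Y" and \<sigma>_ext: "\<sigma> \<in> X \<rightarrow>\<^sub>E Y"
    by (auto simp: bijections_def)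
  have swap_bij: "bij_betw (transpose x0 x1) X X"
    using assms(3,4) by (simp add: bij_betw_def)
  have "\<sigma> \<circ> transpose x0 x1 \<in> X \<rightarrow>\<^sub>E Y"
    using \<sigma>_ext assms(3,4) by (auto simp: transpose_def)
  with bij_betw_trans[OF swap_bij \<sigma>_bij]
  show "\<sigma> \<circ> transpose x0 x1 \<in> bijections X Y"
    by (simp add: bijections_def)
  show "\<sigma> \<circ> transpose x0 x1 \<circ> transpose x0 x1 = \<sigma>"
    by (simp add: comp_assoc)
  have "\<sigma> x1 \<noteq> \<sigma> x0"
    using \<sigma>_bij assms(3-5) by (auto simp: bij_betw_def inj_on_def)
  then show "\<sigma> \<circ> transpose x0 x1 \<noteq> \<sigma>"
    by (metis comp_apply transpose_apply_first)
  have "(\<Prod>x\<in>X. a x (\<sigma> (transpose x0 x1 x))) = (\<Prod>x\<in>X. a (transpose x0 x1 x) (\<sigma> x))"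
    using prod.reindex_bij_betw[OF swap_bij, of "\<lambda>x. a (transpose x0 x1 x) (\<sigma> x)"] by simp
  also have "\<dots> = (\<Prod>x\<in>X. a x (\<sigma> x))"
    using \<sigma>_ext rows by (intro prod.cong) (auto simp: transpose_def PiE_iff)
  finally show "(\<Prod>x\<in>X. a x ((\<sigma> \<circ> transpose x0 x1) x)) = (\<Prod>x\<in>X. a x (\<sigma> x))"
    by simp
qed (simp add: finite_bijections assms)

definition partner :: "'a set set \<Rightarrow> 'a \<Rightarrow> 'a" where
  "partner M v = (THE w. {v, w} \<in> M)"

locale bipartite_graph =
  fixes X Y :: "'a set" and E :: "'a set set"
  assumes sides_disjoint: "X \<inter> Y = {}"
    and edge_between: "e \<in> E \<Longrightarrow> \<exists>x\<in>X. \<exists>y\<in>Y. e = {x, y}"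
begin

lemma swap_sides: "bipartite_graph Y X E"
  by unfold_locales (use sides_disjoint edge_between in \<open>blast+\<close>)

lemma edge_ends:
  assumes "{u, v} \<in> E"
  shows "u \<in> X \<and> v \<in> Y \<or> u \<in> Y \<and> v \<in> X"
  using edge_between[OF assms] by (auto simp: doubleton_eq_iff)

lemma perfect_matching_ex1_partner:
  assumes "perfect_matching (X \<union> Y) E M" "v \<in> X \<union> Y"
  shows "\<exists>!w. {v, w} \<in> M"
proof -
  from assms obtain e where e: "e \<in> M" "v \<in> e" and e_unique: "\<And>e'. e' \<in> M \<Longrightarrow> v \<in> e' \<Longrightarrow> e' = e"
    unfolding perfect_matching_def by blast
  have "e \<in> E"
    using e(1) assms(1) by (auto simp: perfect_matching_def)
  then obtain x y where "e = {x, y}"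
    using edge_between by blast
  with e(2) obtain w where "e = {v, w}"
    by auto
  moreover have "w' = w" if "{v, w'} \<in> M" for w'
    using e_unique[OF that] \<open>e = {v, w}\<close> by (auto simp: doubleton_eq_iff)
  ultimately show ?thesis
    using e(1) by blast
qed

lemma
  assumes "perfect_matching (X \<union> Y) E M" "v \<in> X \<union> Y"
  shows partner_in_matching: "{v, partner M v} \<in> M"
    and partner_eqI: "{v, w} \<in> M \<Longrightarrow> partner M v = w"
proof -
  note ex1 = perfect_matching_ex1_partner[OF assms]
  show "{v, partner M v} \<in> M"
    unfolding partner_def by (rule theI'[OF ex1])
  show "{v, w} \<in> M \<Longrightarrow> partner M v = w"
    unfolding partner_def by (rule the1_equality[OF ex1])
qed

lemma
  assumes "perfect_matching (X \<union> Y) E M" "v \<in> X \<union> Y"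
  shows partner_between: "v \<in> X \<and> partner M v \<in> Y \<or> v \<in> Y \<and> partner M v \<in> X"
    and partner_partner: "partner M (partner M v) = v"
proof -
  have "{v, partner M v} \<in> E"
    using assms partner_in_matching unfolding perfect_matching_def by blast
  then show between: "v \<in> X \<and> partner M v \<in> Y \<or> v \<in> Y \<and> partner M v \<in> X"
    by (rule edge_ends)
  have "{partner M v, v} \<in> M"
    using partner_in_matching[OF assms] by (simp add: insert_commute)
  then show "partner M (partner M v) = v"
    using partner_eqI[OF assms(1), of "partner M v" v] between by blast
qed

abbreviation matching_of :: "('a \<Rightarrow> 'a) \<Rightarrow> 'a set set" where
  "matching_of \<sigma> \<equiv> (\<lambda>x. {x, \<sigma> x}) ` X"

lemma perfect_matching_of_bijection:
  assumes "\<sigma> \<in> bijections X Y" "\<forall>x\<in>X. {x, \<sigma> x} \<in> E"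
  shows "perfect_matching (X \<union> Y) E (matching_of \<sigma>)"
  unfolding perfect_matching_def
proof (intro conjI ballI)
  have \<sigma>_bij: "bij_betw \<sigma> X Y"
    using assms(1) by (simp add: bijections_def)
  then have \<sigma>_Y: "\<sigma> z \<in> Y" if "z \<in> X" for z
    using that by (rule bij_betw_apply)
  have \<sigma>_inj: "inj_on \<sigma> X"
    using \<sigma>_bij by (rule bij_betw_imp_inj_on)
  show "matching_of \<sigma> \<subseteq> E"
    using assms(2) by blast
  fix v assume "v \<in> X \<union> Y"
  then obtain x where x: "x \<in> X" "v = x \<or> v = \<sigma> x"
    using \<sigma>_bij by (auto simp: bij_betw_def)
  have unique: "x' = x" if "x' \<in> X" "v = x' \<or> v = \<sigma> x'" for x'
    using that x \<sigma>_Y sides_disjoint inj_onD[OF \<sigma>_inj] by blast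
  show "\<exists>!e. e \<in> matching_of \<sigma> \<and> v \<in> e"
  proof (rule ex1I[of _ "{x, \<sigma> x}"])
    show "{x, \<sigma> x} \<in> matching_of \<sigma> \<and> v \<in> {x, \<sigma> x}"
      using x by auto
    fix e assume "e \<in> matching_of \<sigma> \<and> v \<in> e"
    then obtain x' where "x' \<in> X" "e = {x', \<sigma> x'}" "v = x' \<or> v = \<sigma> x'"
      by auto
    then show "e = {x, \<sigma> x}"
      using unique by blast
  qed
qed

lemma inj_on_matching_of: "inj_on matching_of (bijections X Y)"
proof (rule inj_onI)
  fix \<sigma> \<tau> assume \<sigma>: "\<sigma> \<in> bijections X Y" and \<tau>: "\<tau> \<in> bijections X Y"
    and eq: "matching_of \<sigma> = matching_of \<tau>"
  have "\<sigma> x = \<tau> x" if "x \<in> X" for x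
  proof -
    obtain x' where x': "x' \<in> X" "{x, \<sigma> x} = {x', \<tau> x'}"
      using eq \<open>x \<in> X\<close> by blast
    have "\<tau> x' \<in> Y"
      using \<tau> x'(1) by (auto simp: bijections_def)
    then show ?thesis
      using x' \<open>x \<in> X\<close> sides_disjoint by (auto simp: doubleton_eq_iff)
  qed
  moreover have "\<sigma> \<in> X \<rightarrow>\<^sub>E Y" "\<tau> \<in> X \<rightarrow>\<^sub>E Y"
    using \<sigma> \<tau> by (simp_all add: bijections_def)
  ultimately show "\<sigma> = \<tau>"
    by (intro PiE_ext)
qed

lemma perfect_matching_eq_matching_of:
  assumes "perfect_matching (X \<union> Y) E M"
  defines "\<sigma> \<equiv> restrict (partner M) X"
  shows "\<sigma> \<in> bijections X Y" "\<forall>x\<in>X. {x, \<sigma> x} \<in> E" "M = matching_of \<sigma>"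
proof -
  have M_E: "M \<subseteq> E"
    using assms(1) by (simp add: perfect_matching_def)
  have partner_X: "partner M x \<in> Y" if "x \<in> X" for x
    using partner_between[OF assms(1), of x] that sides_disjoint by blast
  have partner_Y: "partner M y \<in> X" if "y \<in> Y" for y
    using partner_between[OF assms(1), of y] that sides_disjoint by blast
  have "bij_betw (partner M) X Y"
    using partner_X partner_Y partner_partner[OF assms(1)]
    by (intro bij_betw_byWitness[where f' = "partner M"]) auto
  then have "bij_betw \<sigma> X Y"
    by (simp add: \<sigma>_def)
  moreover have "\<sigma> \<in> X \<rightarrow>\<^sub>E Y"
    using partner_X by (simp add: \<sigma>_def)
  ultimately show "\<sigma> \<in> bijections X Y"
    by (simp add: bijections_def)
  show "\<forall>x\<in>X. {x, \<sigma> x} \<in> E"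
    using partner_in_matching[OF assms(1)] M_E by (auto simp: \<sigma>_def)
  have "e \<in> matching_of \<sigma>" if "e \<in> M" for e
  proof -
    obtain x y where "x \<in> X" "y \<in> Y" "e = {x, y}"
      using edge_between \<open>e \<in> M\<close> M_E by blast
    moreover have "partner M x = y"
      using partner_eqI[OF assms(1), of x y] \<open>e \<in> M\<close> calculation by blast
    ultimately show ?thesis
      by (auto simp: \<sigma>_def)
  qed
  then show "M = matching_of \<sigma>"
    using partner_in_matching[OF assms(1)] by (auto simp: \<sigma>_def)
qed

lemma card_perfect_matchings_eq_card_bijections:
  "card {M. perfect_matching (X \<union> Y) E M} = card {\<sigma> \<in> bijections X Y. \<forall>x\<in>X. {x, \<sigma> x} \<in> E}"
proof -
  have "{M. perfect_matching (X \<union> Y) E M} = matching_of ` {\<sigma> \<in> bijections X Y. \<forall>x\<in>X. {x, \<sigma> x} \<in> E}"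
    using perfect_matching_of_bijection perfect_matching_eq_matching_of by blast
  then show ?thesis
    using card_image[OF inj_on_subset[OF inj_on_matching_of]] by simp
qed

lemma even_card_perfect_matchings_if_even_neighbours:
  assumes "finite X" "finite Y" "C \<subseteq> X" "x0 \<in> C"
    and even_neighbours: "\<And>y. y \<in> Y \<Longrightarrow> even (card {u \<in> C. {u, y} \<in> E})"
  shows "even (card {M. perfect_matching (X \<union> Y) E M})"
proof -
  define a :: "'a \<Rightarrow> 'a \<Rightarrow> bit" where "a = (\<lambda>x y. of_bool ({x, y} \<in> E))"
  have "finite C"
    using assms(1,3) by (rule finite_subset[rotated])
  have row: "a x0 y = (\<Sum>u\<in>C - {x0}. a u y)" if "y \<in> Y" for y
  proof -
    have "a x0 y + (\<Sum>u\<in>C - {x0}. a u y) = (\<Sum>u\<in>C. a u y)"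
      by (rule sum.remove[OF \<open>finite C\<close> assms(4), symmetric])
    also have "\<dots> = of_nat (card {u \<in> C. {u, y} \<in> E})"
      unfolding a_def using \<open>finite C\<close> by (simp add: Int_def)
    also have "\<dots> = 0"
      using even_neighbours[OF that] of_nat_eq_0_bit_iff by simp
    finally show ?thesis
      by (metis minus_bit_def right_minus_eq)
  qed
  have "of_nat (card {M. perfect_matching (X \<union> Y) E M}) = permanent a X Y"
    unfolding a_def card_perfect_matchings_eq_card_bijections
    by (rule of_nat_card_bijections_eq_permanent[OF assms(1,2)])
  also have "\<dots> = (\<Sum>u\<in>C - {x0}. permanent (a(x0 := a u)) X Y)"
    using assms(1,3,4) row by (intro permanent_expand_row[where b = a]) auto
  also have "\<dots> = 0"
  proof (intro sum.neutral ballI)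
    fix u assume "u \<in> C - {x0}"
    then show "permanent (a(x0 := a u)) X Y = 0"
      using assms(1-4) by (intro permanent_equal_rows_bit[of X Y x0 u]) auto
  qed
  finally show ?thesis
    using of_nat_eq_0_bit_iff by simp
qed

lemma even_card_perfect_matchings_if_channel:
  assumes "finite X" "finite Y" "channel (X \<union> Y) E C" "x0 \<in> C \<inter> X"
  shows "even (card {M. perfect_matching (X \<union> Y) E M})"
proof (rule even_card_perfect_matchings_if_even_neighbours[OF assms(1,2) _ assms(4)])
  fix y assume "y \<in> Y"
  have "u \<in> X" if "{u, y} \<in> E" for u
    using edge_ends[OF that] \<open>y \<in> Y\<close> sides_disjoint by blast
  then have "{u \<in> C \<inter> X. {u, y} \<in> E} = {u \<in> C. adjacent E y u}"
    by (auto simp: adjacent_def insert_commute)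
  then show "even (card {u \<in> C \<inter> X. {u, y} \<in> E})"
    using assms(3) \<open>y \<in> Y\<close> by (simp add: channel_def)
qed simp

end

lemma bipartite_graph_if_bipartite:
  assumes "simple_graph V E" "bipartite V E"
  obtains X Y where "V = X \<union> Y" "bipartite_graph X Y E"
proof -
  obtain X Y where XY: "X \<union> Y = V" "X \<inter> Y = {}"
    and crossing: "\<And>e. e \<in> E \<Longrightarrow> card (e \<inter> X) = 1 \<and> card (e \<inter> Y) = 1"
    using assms(2) unfolding bipartite_def by blast
  have "\<exists>x\<in>X. \<exists>y\<in>Y. e = {x, y}" if "e \<in> E" for e
  proof -
    have "card (e \<inter> X) = 1" "card (e \<inter> Y) = 1"
      using crossing[OF that] by auto
    then obtain x y where "e \<inter> X = {x}" "e \<inter> Y = {y}"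
      by (meson card_1_singletonE)
    moreover have "e = (e \<inter> X) \<union> (e \<inter> Y)"
      using assms(1) that XY(1) by (auto simp: simple_graph_def)
    ultimately show ?thesis
      by blast
  qed
  with XY show thesis
    by (intro that[of X Y]) (auto simp: bipartite_graph_def)
qed

theorem corollary5p3:
  fixes V :: "'a set" and E :: "'a set set" and C :: "'a set"
  assumes "simple_graph V E"
    and "bipartite V E"
    and "channel V E C"
    and "C \<noteq> {}"
  shows "even (num_perfect_matchings V E)"
proof -
  obtain X Y where V: "V = X \<union> Y" and G: "bipartite_graph X Y E"
    using bipartite_graph_if_bipartite[OF assms(1,2)] .
  have "finite X" "finite Y"
    using assms(1) V by (auto simp: simple_graph_def)
  obtain c where "c \<in> C"
    using assms(4) by blast
  with assms(3) V have "c \<in> C \<inter> X \<or> c \<in> C \<inter> Y"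
    by (auto simp: channel_def)
  then show ?thesis
  proof
    assume "c \<in> C \<inter> X"
    with G \<open>finite X\<close> \<open>finite Y\<close> assms(3) show ?thesis
      unfolding num_perfect_matchings_def V by (rule bipartite_graph.even_card_perfect_matchings_if_channel)
  next
    assume "c \<in> C \<inter> Y"
    with bipartite_graph.swap_sides[OF G] \<open>finite Y\<close> \<open>finite X\<close> assms(3) show ?thesis
      unfolding num_perfect_matchings_def V Un_commute[of X]
      by (rule bipartite_graph.even_card_perfect_matchings_if_channel)
  qed
qed

end
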